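(* Let $(\mathbb{P},\le,f)$ be a forcing property for $\mathcal{L}_A$ and $G$ a generic set. For every $\varphi\in\mathcal{L}_A^s(C)$, $(\neg\varphi)^G=1-\varphi^G$.
   Context: $\mathcal{L}$ is a countable continuous signature; formulas of $\mathcal{L}_{\omega_1,\omega}$ are built from atomic formulas using $\neg$, $\tfrac12$, $\dotplus$, countable conjunctions $\bigwedge$ and $\inf_x$. $\mathcal{L}_A$ is a countable fragment, $C=\{c_i:i<\omega\}$ new constants, $\mathcal{L}_A(C)$ the smallest countable fragment of $\mathcal{L}_{\omega_1,\omega}(C)$ containing $\mathcal{L}_A$, $\mathcal{L}_A^s(C)$ its sentences, $\mathcal{L}_A^{as}(C)$ its atomic sentences, $\mathcal{T}(C)$ closed terms. A forcing property $(\mathbb{P},\le,f)$: poset with $f_p\colon\mathcal{L}_A^{as}(C)\to[0,1]$ such that (1) $p\le q\Rightarrow f_p\le f_q$; (2) for every $p$, $\varepsilon>0$, $\tau,\sigma\in\mathcal{T}(C)$, atomic $\varphi(x)$ there are $q\le p$, $c\in C$ with $f_q(d(\tau,c))<\varepsilon$, $f_q(d(\tau,\sigma))<f_p(d(\sigma,\tau))+\varepsilon$, and if $f_p(d(\tau,\sigma))<\delta_{\varphi,x}(\varepsilon)$ then $f_q(\varphi(\sigma))<f_p(\varphi(\tau))+\varepsilon$. $F_p$: $f_p$ on atomics; $F_p(\neg\varphi)=1-\inf_{q\le p}F_q(\varphi)$; $F_p(\tfrac12\varphi)=\tfrac12F_p(\varphi)$; $F_p(\varphi\dotplus\psi)=\min(F_p(\varphi)+F_p(\psi),1)$;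 $F_p(\bigwedge\Phi)=\inf_{\varphi\in\Phi}F_p(\varphi)$; $F_p(\inf_x\varphi)=\inf_{c\in C}F_p(\varphi(c))$. $G\subseteq\mathbb{P}$ is generic if nonempty, downward directed, upward closed, and for every sentence $\varphi$ and $r>1$ some $p\in G$ has $F_p(\varphi)+F_p(\neg\varphi)<r$. $\varphi^G:=\inf_{p\in G}F_p(\varphi)$. *)

theory Defs
  imports Complex_Main "HOL-Library.Countable_Set"
begin

text \<open>Variables are natural numbers; Cst i is the new constant c_i of C.\<close>

datatype 'f trm = Var nat | Cst nat | Fn 'f "'f trm list"

datatype ('f, 'r) atom = Rel 'r "'f trm list" | Dist "'f trm" "'f trm"

text \<open>Countable conjunctions are indexed by nat (every nonempty countable set of
formulas is the range of such a family).\<close>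
datatype ('f, 'r) fm =
    Atom "('f, 'r) atom"
  | Neg "('f, 'r) fm"
  | Half "('f, 'r) fm"
  | Plus "('f, 'r) fm" "('f, 'r) fm"
  | Conj "nat \<Rightarrow> ('f, 'r) fm"
  | InfQ nat "('f, 'r) fm"

record ('f, 'r) signature =
  ar_f :: "'f \<Rightarrow> nat"
  ar_r :: "'r \<Rightarrow> nat"
  mod_f :: "'f \<Rightarrow> real \<Rightarrow> real"
  mod_r :: "'r \<Rightarrow> real \<Rightarrow> real"

definition is_signature :: "('f, 'r) signature \<Rightarrow> bool" where
  "is_signature S \<longleftrightarrow> countable (UNIV :: 'f set) \<and> countable (UNIV :: 'r set) \<and>
     (\<forall>g \<epsilon>. \<epsilon> > 0 \<longrightarrow> mod_f S g \<epsilon> > 0) \<and> (\<forall>R \<epsilon>. \<epsilon> > 0 \<longrightarrow> mod_r S R \<epsilon> > 0)"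

fun tvars :: "'f trm \<Rightarrow> nat set" where
  "tvars (Var x) = {x}"
| "tvars (Cst c) = {}"
| "tvars (Fn g ts) = (\<Union>t\<in>set ts. tvars t)"

fun wf_trm :: "('f, 'r) signature \<Rightarrow> bool \<Rightarrow> 'f trm \<Rightarrow> bool" where
  "wf_trm S withC (Var x) = True"
| "wf_trm S withC (Cst c) = withC"
| "wf_trm S withC (Fn g ts) = (length ts = ar_f S g \<and> (\<forall>t\<in>set ts. wf_trm S withC t))"

fun tsubst :: "nat \<Rightarrow> 'f trm \<Rightarrow> 'f trm \<Rightarrow> 'f trm" where
  "tsubst x s (Var y) = (if y = x then s else Var y)"
| "tsubst x s (Cst c) = Cst c"
| "tsubst x s (Fn g ts) = Fn g (map (tsubst x s) ts)"

fun tsubst_env :: "(nat \<Rightarrow> nat) \<Rightarrow> 'f trm \<Rightarrow> 'f trm" where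
  "tsubst_env e (Var y) = Cst (e y)"
| "tsubst_env e (Cst c) = Cst c"
| "tsubst_env e (Fn g ts) = Fn g (map (tsubst_env e) ts)"

text \<open>Modulus of uniform continuity of a term in the variable x, computed from the
moduli of the symbols of the signature.\<close>
fun tdelta :: "('f, 'r) signature \<Rightarrow> nat \<Rightarrow> 'f trm \<Rightarrow> real \<Rightarrow> real" where
  "tdelta S x (Var y) \<epsilon> = (if y = x then \<epsilon> else 1)"
| "tdelta S x (Cst c) \<epsilon> = 1"
| "tdelta S x (Fn g ts) \<epsilon> = foldr min (map (\<lambda>t. tdelta S x t (mod_f S g \<epsilon>)) ts) 1"

fun avars :: "('f, 'r) atom \<Rightarrow> nat set" where
  "avars (Rel R ts) = (\<Union>t\<in>set ts. tvars t)"
| "avars (Dist t u) = tvars t \<union> tvars u"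

fun wf_atom :: "('f, 'r) signature \<Rightarrow> bool \<Rightarrow> ('f, 'r) atom \<Rightarrow> bool" where
  "wf_atom S withC (Rel R ts) = (length ts = ar_r S R \<and> (\<forall>t\<in>set ts. wf_trm S withC t))"
| "wf_atom S withC (Dist t u) = (wf_trm S withC t \<and> wf_trm S withC u)"

fun asubst :: "nat \<Rightarrow> 'f trm \<Rightarrow> ('f, 'r) atom \<Rightarrow> ('f, 'r) atom" where
  "asubst x s (Rel R ts) = Rel R (map (tsubst x s) ts)"
| "asubst x s (Dist t u) = Dist (tsubst x s t) (tsubst x s u)"

fun asubst_env :: "(nat \<Rightarrow> nat) \<Rightarrow> ('f, 'r) atom \<Rightarrow> ('f, 'r) atom" where
  "asubst_env e (Rel R ts) = Rel R (map (tsubst_env e) ts)"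
| "asubst_env e (Dist t u) = Dist (tsubst_env e t) (tsubst_env e u)"

fun adelta :: "('f, 'r) signature \<Rightarrow> nat \<Rightarrow> ('f, 'r) atom \<Rightarrow> real \<Rightarrow> real" where
  "adelta S x (Rel R ts) \<epsilon> = foldr min (map (\<lambda>t. tdelta S x t (mod_r S R \<epsilon>)) ts) 1"
| "adelta S x (Dist t u) \<epsilon> = min (tdelta S x t (\<epsilon> / 2)) (tdelta S x u (\<epsilon> / 2))"

primrec fv :: "('f, 'r) fm \<Rightarrow> nat set" where
  "fv (Atom a) = avars a"
| "fv (Neg \<phi>) = fv \<phi>"
| "fv (Half \<phi>) = fv \<phi>"
| "fv (Plus \<phi> \<psi>) = fv \<phi> \<union> fv \<psi>"
| "fv (Conj g) = (\<Union>i. fv (g i))"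
| "fv (InfQ x \<phi>) = fv \<phi> - {x}"

primrec wf_fm :: "('f, 'r) signature \<Rightarrow> bool \<Rightarrow> ('f, 'r) fm \<Rightarrow> bool" where
  "wf_fm S withC (Atom a) = wf_atom S withC a"
| "wf_fm S withC (Neg \<phi>) = wf_fm S withC \<phi>"
| "wf_fm S withC (Half \<phi>) = wf_fm S withC \<phi>"
| "wf_fm S withC (Plus \<phi> \<psi>) = (wf_fm S withC \<phi> \<and> wf_fm S withC \<psi>)"
| "wf_fm S withC (Conj g) = (\<forall>i. wf_fm S withC (g i))"
| "wf_fm S withC (InfQ x \<phi>) = wf_fm S withC \<phi>"

primrec subst :: "nat \<Rightarrow> 'f trm \<Rightarrow> ('f, 'r) fm \<Rightarrow> ('f, 'r) fm" where
  "subst x s (Atom a) = Atom (asubst x s a)"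
| "subst x s (Neg \<phi>) = Neg (subst x s \<phi>)"
| "subst x s (Half \<phi>) = Half (subst x s \<phi>)"
| "subst x s (Plus \<phi> \<psi>) = Plus (subst x s \<phi>) (subst x s \<psi>)"
| "subst x s (Conj g) = Conj (\<lambda>i. subst x s (g i))"
| "subst x s (InfQ y \<phi>) = (if y = x then InfQ y \<phi> else InfQ y (subst x s \<phi>))"

primrec free_for :: "'f trm \<Rightarrow> nat \<Rightarrow> ('f, 'r) fm \<Rightarrow> bool" where
  "free_for s x (Atom a) = True"
| "free_for s x (Neg \<phi>) = free_for s x \<phi>"
| "free_for s x (Half \<phi>) = free_for s x \<phi>"
| "free_for s x (Plus \<phi> \<psi>) = (free_for s x \<phi> \<and> free_for s x \<psi>)"
| "free_for s x (Conj g) = (\<forall>i. free_for s x (g i))"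
| "free_for s x (InfQ y \<phi>) = (x \<notin> fv (InfQ y \<phi>) \<or> (y \<notin> tvars s \<and> free_for s x \<phi>))"

text \<open>A fragment of L_{omega1,omega} (withC = False) or of L_{omega1,omega}(C) (withC = True):
contains all atomic formulas, closed under the connectives, finite conjunctions,
inf_x, subformulas and substitution of terms.\<close>
definition fragment :: "('f, 'r) signature \<Rightarrow> bool \<Rightarrow> ('f, 'r) fm set \<Rightarrow> bool" where
  "fragment S withC F \<longleftrightarrow>
     (\<forall>\<phi>\<in>F. wf_fm S withC \<phi>) \<and>
     (\<forall>a. wf_atom S withC a \<longrightarrow> Atom a \<in> F) \<and>
     (\<forall>\<phi>\<in>F. Neg \<phi> \<in> F \<and> Half \<phi> \<in> F \<and> (\<forall>x. InfQ x \<phi> \<in> F)) \<and>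
     (\<forall>\<phi>\<in>F. \<forall>\<psi>\<in>F. Plus \<phi> \<psi> \<in> F \<and> Conj (\<lambda>i. if i = 0 then \<phi> else \<psi>) \<in> F) \<and>
     (\<forall>\<phi>. Neg \<phi> \<in> F \<longrightarrow> \<phi> \<in> F) \<and>
     (\<forall>\<phi>. Half \<phi> \<in> F \<longrightarrow> \<phi> \<in> F) \<and>
     (\<forall>\<phi> \<psi>. Plus \<phi> \<psi> \<in> F \<longrightarrow> \<phi> \<in> F \<and> \<psi> \<in> F) \<and>
     (\<forall>g. Conj g \<in> F \<longrightarrow> (\<forall>i. g i \<in> F)) \<and>
     (\<forall>x \<phi>. InfQ x \<phi> \<in> F \<longrightarrow> \<phi> \<in> F) \<and>
     (\<forall>\<phi>\<in>F. \<forall>x s. wf_trm S withC s \<and> free_for s x \<phi> \<longrightarrow> subst x s \<phi> \<in> F)"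

definition LAC :: "('f, 'r) signature \<Rightarrow> ('f, 'r) fm set \<Rightarrow> ('f, 'r) fm set" where
  "LAC S LA = \<Inter> {F. fragment S True F \<and> countable F \<and> LA \<subseteq> F}"

definition sentences :: "('f, 'r) signature \<Rightarrow> ('f, 'r) fm set \<Rightarrow> ('f, 'r) fm set" where
  "sentences S LA = {\<phi> \<in> LAC S LA. fv \<phi> = {}}"

definition atomic_sentences :: "('f, 'r) signature \<Rightarrow> ('f, 'r) fm set \<Rightarrow> ('f, 'r) atom set" where
  "atomic_sentences S LA = {a. Atom a \<in> LAC S LA \<and> avars a = {}}"

definition closed_terms :: "('f, 'r) signature \<Rightarrow> 'f trm set" where
  "closed_terms S = {t. wf_trm S True t \<and> tvars t = {}}"

definition forcing_property ::
  "('f, 'r) signature \<Rightarrow> ('f, 'r) fm set \<Rightarrow> 'p set \<Rightarrow> ('p \<Rightarrow> 'p \<Rightarrow> bool)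
     \<Rightarrow> ('p \<Rightarrow> ('f, 'r) atom \<Rightarrow> real) \<Rightarrow> bool" where
  "forcing_property S LA P le f \<longleftrightarrow>
     (\<forall>p\<in>P. le p p) \<and>
     (\<forall>p\<in>P. \<forall>q\<in>P. le p q \<and> le q p \<longrightarrow> p = q) \<and>
     (\<forall>p\<in>P. \<forall>q\<in>P. \<forall>r\<in>P. le p q \<and> le q r \<longrightarrow> le p r) \<and>
     (\<forall>p\<in>P. \<forall>a\<in>atomic_sentences S LA. 0 \<le> f p a \<and> f p a \<le> 1) \<and>
     (\<forall>p\<in>P. \<forall>q\<in>P. le p q \<longrightarrow> (\<forall>a\<in>atomic_sentences S LA. f p a \<le> f q a)) \<and>
     (\<forall>p\<in>P. \<forall>\<epsilon>>0. \<forall>\<tau>\<in>closed_terms S. \<forall>\<sigma>\<in>closed_terms S. \<forall>\<phi> x.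
        Atom \<phi> \<in> LAC S LA \<and> avars \<phi> \<subseteq> {x} \<longrightarrow>
        (\<exists>q\<in>P. le q p \<and> (\<exists>c. f q (Dist \<tau> (Cst c)) < \<epsilon> \<and>
            f q (Dist \<tau> \<sigma>) < f p (Dist \<sigma> \<tau>) + \<epsilon> \<and>
            (f p (Dist \<tau> \<sigma>) < adelta S x \<phi> \<epsilon> \<longrightarrow>
               f q (asubst x \<sigma> \<phi>) < f p (asubst x \<tau> \<phi>) + \<epsilon>))))"

text \<open>F_p, defined for all formulas relative to an assignment e of constants c_{e x}
to variables x (so that F_p(inf_x phi) = inf_c F_p(phi(c))); on sentences e is irrelevant.\<close>
primrec Fenv :: "'p set \<Rightarrow> ('p \<Rightarrow> 'p \<Rightarrow> bool) \<Rightarrow> ('p \<Rightarrow> ('f, 'r) atom \<Rightarrow> real)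
    \<Rightarrow> ('f, 'r) fm \<Rightarrow> (nat \<Rightarrow> nat) \<Rightarrow> 'p \<Rightarrow> real" where
  "Fenv P le f (Atom a) e p = f p (asubst_env e a)"
| "Fenv P le f (Neg \<phi>) e p = 1 - (INF q\<in>{q\<in>P. le q p}. Fenv P le f \<phi> e q)"
| "Fenv P le f (Half \<phi>) e p = Fenv P le f \<phi> e p / 2"
| "Fenv P le f (Plus \<phi> \<psi>) e p = min (Fenv P le f \<phi> e p + Fenv P le f \<psi> e p) 1"
| "Fenv P le f (Conj g) e p = (INF i. Fenv P le f (g i) e p)"
| "Fenv P le f (InfQ x \<phi>) e p = (INF c. Fenv P le f \<phi> (e(x := c)) p)"

definition Fp :: "'p set \<Rightarrow> ('p \<Rightarrow> 'p \<Rightarrow> bool) \<Rightarrow> ('p \<Rightarrow> ('f, 'r) atom \<Rightarrow> real)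
    \<Rightarrow> 'p \<Rightarrow> ('f, 'r) fm \<Rightarrow> real" where
  "Fp P le f p \<phi> = Fenv P le f \<phi> (\<lambda>_. 0) p"

definition generic :: "('f, 'r) signature \<Rightarrow> ('f, 'r) fm set \<Rightarrow> 'p set \<Rightarrow> ('p \<Rightarrow> 'p \<Rightarrow> bool)
    \<Rightarrow> ('p \<Rightarrow> ('f, 'r) atom \<Rightarrow> real) \<Rightarrow> 'p set \<Rightarrow> bool" where
  "generic S LA P le f G \<longleftrightarrow>
     G \<subseteq> P \<and> G \<noteq> {} \<and>
     (\<forall>p\<in>G. \<forall>q\<in>G. \<exists>r\<in>G. le r p \<and> le r q) \<and>
     (\<forall>p\<in>G. \<forall>q\<in>P. le p q \<longrightarrow> q \<in> G) \<and>
     (\<forall>\<phi>\<in>sentences S LA. \<forall>r>1. \<exists>p\<in>G. Fp P le f p \<phi> + Fp P le f p (Neg \<phi>) < r)"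

definition valG :: "'p set \<Rightarrow> ('p \<Rightarrow> 'p \<Rightarrow> bool) \<Rightarrow> ('p \<Rightarrow> ('f, 'r) atom \<Rightarrow> real)
    \<Rightarrow> 'p set \<Rightarrow> ('f, 'r) fm \<Rightarrow> real" where
  "valG P le f G \<phi> = (INF p\<in>G. Fp P le f p \<phi>)"

end

theory Submission
  imports Defs
begin

text \<open>By induction on formulas every F_p takes values in [0,1] and is
antitone in p, and F_p(\<not>\<phi>) + F_p(\<phi>) \<ge> 1 because p extends itself. Along the directed
set G the antitone functions F_p(\<not>\<phi>) and F_p(\<phi>) have infima whose sum is therefore
at least 1, while genericity provides conditions in G where the sum is arbitrarily
close to 1.\<close>

lemma INF_eq_diff_INF_if_directed:
  fixes a b :: "'p \<Rightarrow> real" and c :: real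
  assumes "G \<noteq> {}"
    and directed: "\<And>p q. p \<in> G \<Longrightarrow> q \<in> G \<Longrightarrow> \<exists>r\<in>G. le r p \<and> le r q"
    and antitone_a: "\<And>p q. p \<in> G \<Longrightarrow> q \<in> G \<Longrightarrow> le q p \<Longrightarrow> a q \<le> a p"
    and antitone_b: "\<And>p q. p \<in> G \<Longrightarrow> q \<in> G \<Longrightarrow> le q p \<Longrightarrow> b q \<le> b p"
    and sum_ge: "\<And>p. p \<in> G \<Longrightarrow> c \<le> a p + b p"
    and sum_approx: "\<And>r. r > c \<Longrightarrow> \<exists>p\<in>G. a p + b p < r"
    and bdd_a: "bdd_below (a ` G)" and bdd_b: "bdd_below (b ` G)"
  shows "(INF p\<in>G. b p) = c - (INF p\<in>G. a p)"
proof (rule antisym)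
  show "(INF p\<in>G. b p) \<le> c - (INF p\<in>G. a p)"
  proof (rule field_le_epsilon)
    fix \<epsilon> :: real assume "0 < \<epsilon>"
    then obtain p where p: "p \<in> G" "a p + b p < c + \<epsilon>"
      using sum_approx[of "c + \<epsilon>"] by auto
    have "(INF p\<in>G. a p) \<le> a p" "(INF p\<in>G. b p) \<le> b p"
      using p(1) bdd_a bdd_b by (auto intro: cINF_lower)
    with p(2) show "(INF p\<in>G. b p) \<le> c - (INF p\<in>G. a p) + \<epsilon>" by linarith
  qed
next
  have cross: "c \<le> a p + b q" if pq: "p \<in> G" "q \<in> G" for p q
  proof -
    obtain r where "r \<in> G" "le r p" "le r q" using directed[OF pq] by blast
    with pq have "a r \<le> a p" "b r \<le> b q" "c \<le> a r + b r"
      by (simp_all add: antitone_a antitone_b sum_ge)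
    then show ?thesis by linarith
  qed
  show "c - (INF p\<in>G. a p) \<le> (INF p\<in>G. b p)"
  proof (rule cINF_greatest[OF \<open>G \<noteq> {}\<close>])
    fix q assume "q \<in> G"
    then have "c - b q \<le> (INF p\<in>G. a p)"
      using cross by (intro cINF_greatest[OF \<open>G \<noteq> {}\<close>]) (auto simp: algebra_simps)
    then show "c - (INF p\<in>G. a p) \<le> b q" by linarith
  qed
qed

lemma LAC_closed:
  assumes "\<phi> \<in> LAC S LA" and "\<And>F. fragment S True F \<Longrightarrow> \<phi> \<in> F \<Longrightarrow> \<psi> \<in> F"
  shows "\<psi> \<in> LAC S LA"
  using assms unfolding LAC_def by blast

lemma LAC_subformulas:
  shows "Neg \<phi> \<in> LAC S LA \<Longrightarrow> \<phi> \<in> LAC S LA"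
    and "Half \<phi> \<in> LAC S LA \<Longrightarrow> \<phi> \<in> LAC S LA"
    and "Plus \<phi> \<psi> \<in> LAC S LA \<Longrightarrow> \<phi> \<in> LAC S LA"
    and "Plus \<phi> \<psi> \<in> LAC S LA \<Longrightarrow> \<psi> \<in> LAC S LA"
    and "Conj g \<in> LAC S LA \<Longrightarrow> g i \<in> LAC S LA"
    and "InfQ x \<phi> \<in> LAC S LA \<Longrightarrow> \<phi> \<in> LAC S LA"
  by (erule LAC_closed; unfold fragment_def; blast)+

lemma wf_trm_tsubst_env: "wf_trm S True t \<Longrightarrow> wf_trm S True (tsubst_env e t)"
  by (induction t) auto

lemma tvars_tsubst_env [simp]: "tvars (tsubst_env e t) = {}"
  by (induction t) auto

lemma wf_atom_asubst_env: "wf_atom S True a \<Longrightarrow> wf_atom S True (asubst_env e a)"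
  by (cases a) (auto intro: wf_trm_tsubst_env)

lemma avars_asubst_env [simp]: "avars (asubst_env e a) = {}"
  by (cases a) auto

lemma asubst_env_in_atomic_sentences:
  assumes "Atom a \<in> LAC S LA"
  shows "asubst_env e a \<in> atomic_sentences S LA"
proof -
  have "Atom (asubst_env e a) \<in> LAC S LA"
    using assms
  proof (rule LAC_closed)
    fix F assume "fragment S True F" "Atom a \<in> F"
    then have "wf_atom S True a" and "\<forall>b. wf_atom S True b \<longrightarrow> Atom b \<in> F"
      unfolding fragment_def by (metis wf_fm.simps(1))+
    then show "Atom (asubst_env e a) \<in> F" by (blast intro: wf_atom_asubst_env)
  qed
  then show ?thesis unfolding atomic_sentences_def by simp
qed

context
  fixes S :: "('f, 'r) signature" and LA :: "('f, 'r) fm set"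
    and P :: "'p set" and le :: "'p \<Rightarrow> 'p \<Rightarrow> bool"
    and f :: "'p \<Rightarrow> ('f, 'r) atom \<Rightarrow> real"
  assumes fp: "forcing_property S LA P le f"
begin

lemma forcing_le_refl: "p \<in> P \<Longrightarrow> le p p"
  using fp unfolding forcing_property_def by blast

lemma forcing_le_trans: "p \<in> P \<Longrightarrow> q \<in> P \<Longrightarrow> r \<in> P \<Longrightarrow> le p q \<Longrightarrow> le q r \<Longrightarrow> le p r"
  using fp unfolding forcing_property_def by blast

lemma atomic_forcing_bounds: "p \<in> P \<Longrightarrow> a \<in> atomic_sentences S LA \<Longrightarrow> 0 \<le> f p a \<and> f p a \<le> 1"
  using fp unfolding forcing_property_def by blast

lemma atomic_forcing_antitone:
  "p \<in> P \<Longrightarrow> q \<in> P \<Longrightarrow> le q p \<Longrightarrow> a \<in> atomic_sentences S LA \<Longrightarrow> f q a \<le> f p a"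
  using fp unfolding forcing_property_def by blast

lemma Fenv_bounds:
  assumes "\<psi> \<in> LAC S LA" "p \<in> P"
  shows "0 \<le> Fenv P le f \<psi> e p \<and> Fenv P le f \<psi> e p \<le> 1"
  using assms
proof (induction \<psi> arbitrary: e p)
  case (Atom a)
  then show ?case using atomic_forcing_bounds asubst_env_in_atomic_sentences[OF Atom(1)] by simp
next
  case (Neg \<psi>)
  have IH: "0 \<le> Fenv P le f \<psi> e q \<and> Fenv P le f \<psi> e q \<le> 1" if "q \<in> P" for q
    using Neg.IH LAC_subformulas(1)[OF Neg.prems(1)] that by blast
  have below: "{q \<in> P. le q p} \<noteq> {}" "p \<in> {q \<in> P. le q p}"
    using Neg.prems(2) forcing_le_refl by auto
  have "bdd_below ((\<lambda>q. Fenv P le f \<psi> e q) ` {q \<in> P. le q p})"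
    using IH by (intro bdd_belowI[where m = 0]) auto
  then have "(INF q\<in>{q \<in> P. le q p}. Fenv P le f \<psi> e q) \<le> Fenv P le f \<psi> e p"
    using below(2) by (rule cINF_lower)
  moreover have "0 \<le> (INF q\<in>{q \<in> P. le q p}. Fenv P le f \<psi> e q)"
    using IH by (intro cINF_greatest[OF below(1)]) auto
  moreover have "Fenv P le f (Neg \<psi>) e p = 1 - (INF q\<in>{q \<in> P. le q p}. Fenv P le f \<psi> e q)"
    by simp
  ultimately show ?case using IH[OF Neg.prems(2)] by linarith
next
  case (Half \<psi>)
  then have "0 \<le> Fenv P le f \<psi> e p \<and> Fenv P le f \<psi> e p \<le> 1"
    using LAC_subformulas(2) by blast
  then show ?case by simp
next
  case (Plus \<psi>1 \<psi>2)
  then have "0 \<le> Fenv P le f \<psi>1 e p" "0 \<le> Fenv P le f \<psi>2 e p"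
    using LAC_subformulas(3,4) by blast+
  then show ?case by simp
next
  case (Conj g)
  have IH: "0 \<le> Fenv P le f (g i) e p \<and> Fenv P le f (g i) e p \<le> 1" for i
    using Conj.IH LAC_subformulas(5)[OF Conj.prems(1)] Conj.prems(2) by blast
  then have "bdd_below (range (\<lambda>i. Fenv P le f (g i) e p))"
    by (intro bdd_belowI[where m = 0]) auto
  then have "(INF i. Fenv P le f (g i) e p) \<le> Fenv P le f (g 0) e p"
    by (rule cINF_lower) simp
  then show ?case using IH by (auto intro: cINF_greatest order_trans)
next
  case (InfQ x \<psi>)
  have IH: "0 \<le> Fenv P le f \<psi> e' p \<and> Fenv P le f \<psi> e' p \<le> 1" for e'
    using InfQ.IH LAC_subformulas(6)[OF InfQ.prems(1)] InfQ.prems(2) by blast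
  then have "bdd_below (range (\<lambda>c. Fenv P le f \<psi> (e(x := c)) p))"
    by (intro bdd_belowI[where m = 0]) auto
  then have "(INF c. Fenv P le f \<psi> (e(x := c)) p) \<le> Fenv P le f \<psi> (e(x := 0)) p"
    by (rule cINF_lower) simp
  then show ?case using IH by (auto intro: cINF_greatest order_trans)
qed

lemma bdd_below_Fenv:
  assumes "\<psi> \<in> LAC S LA" "A \<subseteq> P"
  shows "bdd_below ((\<lambda>q. Fenv P le f \<psi> e q) ` A)"
  using Fenv_bounds[OF assms(1)] assms(2) by (intro bdd_belowI[where m = 0]) auto

lemma Fenv_antitone:
  assumes "\<psi> \<in> LAC S LA" "p \<in> P" "q \<in> P" "le q p"
  shows "Fenv P le f \<psi> e q \<le> Fenv P le f \<psi> e p"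
  using assms
proof (induction \<psi> arbitrary: e)
  case (Atom a)
  then show ?case using atomic_forcing_antitone asubst_env_in_atomic_sentences[OF Atom(1)] by simp
next
  case (Neg \<psi>)
  have "(INF r\<in>{r \<in> P. le r p}. Fenv P le f \<psi> e r) \<le> (INF r\<in>{r \<in> P. le r q}. Fenv P le f \<psi> e r)"
  proof (rule cINF_superset_mono)
    show "{r \<in> P. le r q} \<noteq> {}" using Neg.prems(3) forcing_le_refl by auto
    show "bdd_below ((\<lambda>r. Fenv P le f \<psi> e r) ` {r \<in> P. le r p})"
      using LAC_subformulas(1)[OF Neg.prems(1)] by (rule bdd_below_Fenv) blast
    show "{r \<in> P. le r q} \<subseteq> {r \<in> P. le r p}"
      using Neg.prems forcing_le_trans by blast
  qed simp
  then show ?case by simp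
next
  case (Half \<psi>)
  then have "Fenv P le f \<psi> e q \<le> Fenv P le f \<psi> e p"
    using LAC_subformulas(2) by blast
  then show ?case by simp
next
  case (Plus \<psi>1 \<psi>2)
  then have "Fenv P le f \<psi>1 e q \<le> Fenv P le f \<psi>1 e p" "Fenv P le f \<psi>2 e q \<le> Fenv P le f \<psi>2 e p"
    using LAC_subformulas(3,4) by blast+
  then show ?case by (simp add: min_def)
next
  case (Conj g)
  have "bdd_below (range (\<lambda>i. Fenv P le f (g i) e q))"
    using Fenv_bounds[OF LAC_subformulas(5)[OF Conj.prems(1)] Conj.prems(3)]
    by (intro bdd_belowI[where m = 0]) auto
  moreover have "Fenv P le f (g i) e q \<le> Fenv P le f (g i) e p" for i
    using Conj.IH Conj.prems LAC_subformulas(5) by blast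
  ultimately show ?case unfolding Fenv.simps by (intro cINF_mono) auto
next
  case (InfQ x \<psi>)
  have "bdd_below (range (\<lambda>c. Fenv P le f \<psi> (e(x := c)) q))"
    using Fenv_bounds[OF LAC_subformulas(6)[OF InfQ.prems(1)] InfQ.prems(3)]
    by (intro bdd_belowI[where m = 0]) auto
  moreover have "Fenv P le f \<psi> (e(x := c)) q \<le> Fenv P le f \<psi> (e(x := c)) p" for c
    using InfQ.IH InfQ.prems LAC_subformulas(6) by blast
  ultimately show ?case unfolding Fenv.simps by (intro cINF_mono) auto
qed

lemma Fenv_Neg_plus_ge_one:
  assumes "\<psi> \<in> LAC S LA" "p \<in> P"
  shows "1 \<le> Fenv P le f \<psi> e p + Fenv P le f (Neg \<psi>) e p"
proof -
  have "bdd_below ((\<lambda>q. Fenv P le f \<psi> e q) ` {q \<in> P. le q p})"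
    using assms(1) by (rule bdd_below_Fenv) blast
  then have "(INF q\<in>{q \<in> P. le q p}. Fenv P le f \<psi> e q) \<le> Fenv P le f \<psi> e p"
    by (rule cINF_lower) (use assms(2) forcing_le_refl in simp)
  then show ?thesis by simp
qed

end

theorem lemma2p14:
  fixes S :: "('f, 'r) signature" and LA :: "('f, 'r) fm set"
    and P :: "'p set" and le :: "'p \<Rightarrow> 'p \<Rightarrow> bool"
    and f :: "'p \<Rightarrow> ('f, 'r) atom \<Rightarrow> real" and G :: "'p set"
    and \<phi> :: "('f, 'r) fm"
  assumes "is_signature S"
    and "fragment S False LA" and "countable LA"
    and fp: "forcing_property S LA P le f"
    and gen: "generic S LA P le f G"
    and sent: "\<phi> \<in> sentences S LA"
  shows "valG P le f G (Neg \<phi>) = 1 - valG P le f G \<phi>"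
proof -
  have \<phi>: "\<phi> \<in> LAC S LA"
    using sent unfolding sentences_def by simp
  have Neg_\<phi>: "Neg \<phi> \<in> LAC S LA"
    using \<phi> by (rule LAC_closed) (unfold fragment_def, blast)
  have GP: "G \<subseteq> P"
    using gen unfolding generic_def by blast
  have bdd: "bdd_below ((\<lambda>p. Fp P le f p \<psi>) ` G)" if "\<psi> \<in> LAC S LA" for \<psi>
    using bdd_below_Fenv[OF fp that GP] unfolding Fp_def .
  have antitone: "Fp P le f q \<psi> \<le> Fp P le f p \<psi>"
    if "\<psi> \<in> LAC S LA" "p \<in> G" "q \<in> G" "le q p" for \<psi> p q
    using Fenv_antitone[OF fp that(1)] that(2-4) GP unfolding Fp_def by blast
  show ?thesis
    unfolding valG_def
  proof (rule INF_eq_diff_INF_if_directed)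
    show "G \<noteq> {}" "\<And>p q. p \<in> G \<Longrightarrow> q \<in> G \<Longrightarrow> \<exists>r\<in>G. le r p \<and> le r q"
      "\<And>r. r > 1 \<Longrightarrow> \<exists>p\<in>G. Fp P le f p \<phi> + Fp P le f p (Neg \<phi>) < r"
      using gen sent unfolding generic_def by blast+
    show "\<And>p. p \<in> G \<Longrightarrow> 1 \<le> Fp P le f p \<phi> + Fp P le f p (Neg \<phi>)"
      using Fenv_Neg_plus_ge_one[OF fp \<phi>] GP unfolding Fp_def by blast
  qed (use \<phi> Neg_\<phi> bdd antitone in auto)
qed

end
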